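(* Let $\lambda\in\Lambda^+$ and let $M$ be a $\mathfrak g$-submodule of $\mathcal V(\lambda)$. For $\alpha\in\mathbb N^m$ and $\mu\subseteq[1,n]$ put $M_{\alpha,\mu}=\{v\in L^0(\lambda): x^\alpha y_\mu\otimes v\in M\}$ and $M^\flat=\bigcap_{\alpha,\mu}M_{\alpha,\mu}$. If $M^\flat\neq0$, then $M=\mathcal V(\lambda)$.
   Context: $\mathbb F$ algebraically closed of characteristic $0$, $m,n\ge1$. $\mathcal R=\mathbb F[x_1,\dots,x_m]\otimes\Lambda(y_1,\dots,y_n)$ ($x_i$ even, $y_s$ odd); $x^\alpha=\prod x_i^{\alpha_i}$, $y_\mu=y_{j_1}\cdots y_{j_r}$ for $\mu=\{j_1<\dots<j_r\}$. $\mathfrak g=W(m,n)$ the Lie superalgebra of superderivations of $\mathcal R$, free over $\mathcal R$ on $\partial_i$ (even) and $D_t$ (odd); $\mathfrak g_0\cong\mathfrak{gl}(m|n)$. $L^0(\lambda)$ is the finite-dimensional irreducible $\mathfrak g_0$-module of highest weight $\lambda\in\Lambda^+$ (dominant integral), representation $\xi$. $\mathcal V(\lambda)=\mathcal R\otimes L^0(\lambda)$ with action (homogeneous $f,g$): $f\partial_i.(g\otimes v)=f\partial_i(g)\otimes v+\sum_j\partial_j(f)g\otimes\xi(x_j\partial_i)v+(-1)^{\wp(f)+\wp(g)+1}\sum_jD_j(f)g\otimes\xi(y_j\partial_i)v$, $fD_i.(g\otimes v)=fD_i(g)\otimes v+(-1)^{\wp(g)}\sum_j\partial_j(f)g\otimes\xi(x_jD_i)v+(-1)^{\wp(f)+1}\sum_jD_j(f)g\otimes\xi(y_jD_i)v$.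 *)

theory Defs
  imports Main "HOL-Computational_Algebra.Polynomial"
begin

text \<open>Even variables x_0..x_(m-1), odd variables y_0..y_(n-1) (0-based).
A monomial x^alpha y_mu is a pair (alpha, mu) with alpha :: nat => nat, mu :: nat set.
The finite-dimensional super vector space L is F^d (vectors nat => 'a vanishing at k >= d),
with even part spanned by the coordinates k < d0 and odd part by d0 <= k < d.
gl(m|n) has basis z_a partial_b (a, b < m+n), where z_a = x_a (a < m), z_a = y_(a-m) (a >= m),
partial_b = d/dx_b (b < m), partial_b = D_(b-m) (b >= m). The representation xi assigns
to z_a partial_b the d x d matrix xi a b.\<close>

type_synonym mon = "(nat \<Rightarrow> nat) \<times> nat set"

definition alg_closed_field :: "'a::field itself \<Rightarrow> bool" where
  "alg_closed_field _ \<longleftrightarrow> (\<forall>p::'a poly. degree p \<ge> 1 \<longrightarrow> (\<exists>x. poly p x = 0))"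

definition valid_mon :: "nat \<Rightarrow> nat \<Rightarrow> mon \<Rightarrow> bool" where
  "valid_mon m n g \<longleftrightarrow> (\<forall>k\<ge>m. fst g k = 0) \<and> snd g \<subseteq> {..<n}"

definition mpar :: "mon \<Rightarrow> nat" where
  "mpar g = card (snd g)"

definition dx :: "nat \<Rightarrow> mon \<Rightarrow> 'a::field \<times> mon" where
  "dx i g = (of_nat (fst g i), ((fst g)(i := fst g i - 1), snd g))"

text \<open>D_t (x^alpha y_mu) = coefficient * monomial (odd left derivation)\<close>
definition dy :: "nat \<Rightarrow> mon \<Rightarrow> 'a::field \<times> mon" where
  "dy t g = ((if t \<in> snd g then (-1) ^ card {s\<in>snd g. s < t} else 0), (fst g, snd g - {t}))"

text \<open>product of two monomials in the supercommutative algebra R\<close>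
definition mmul :: "mon \<Rightarrow> mon \<Rightarrow> 'a::field \<times> mon" where
  "mmul f g = ((if snd f \<inter> snd g = {}
                then (-1) ^ card {(s,t). s \<in> snd f \<and> t \<in> snd g \<and> t < s} else 0),
               (\<lambda>k. fst f k + fst g k, snd f \<union> snd g))"

definition mulc :: "mon \<Rightarrow> 'a::field \<times> mon \<Rightarrow> 'a \<times> mon" where
  "mulc f cg = (fst cg * fst (mmul f (snd cg)), snd (mmul f (snd cg) :: 'a \<times> mon))"

definition cmulr :: "'a::field \<times> mon \<Rightarrow> mon \<Rightarrow> 'a \<times> mon" where
  "cmulr cf g = (fst cf * fst (mmul (snd cf) g), snd (mmul (snd cf) g :: 'a \<times> mon))"

text \<open>elements of V = R (x) L are functions mon => (nat => 'a), finitely supported\<close>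
definition ctens :: "'a::field \<times> mon \<Rightarrow> (nat \<Rightarrow> 'a) \<Rightarrow> mon \<Rightarrow> nat \<Rightarrow> 'a" where
  "ctens ch w h k = (if h = snd ch then fst ch * w k else 0)"

definition tens :: "mon \<Rightarrow> (nat \<Rightarrow> 'a::field) \<Rightarrow> mon \<Rightarrow> nat \<Rightarrow> 'a" where
  "tens g v = ctens (1, g) v"

definition mv :: "nat \<Rightarrow> (nat \<Rightarrow> nat \<Rightarrow> 'a::field) \<Rightarrow> (nat \<Rightarrow> 'a) \<Rightarrow> nat \<Rightarrow> 'a" where
  "mv d A v = (\<lambda>k. if k < d then (\<Sum>l<d. A k l * v l) else 0)"

definition Lcar :: "nat \<Rightarrow> (nat \<Rightarrow> 'a::field) set" where
  "Lcar d = {v. \<forall>k\<ge>d. v k = 0}"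

definition Vcar :: "nat \<Rightarrow> nat \<Rightarrow> nat \<Rightarrow> (mon \<Rightarrow> nat \<Rightarrow> 'a::field) set" where
  "Vcar m n d = {\<Phi>. finite {g. \<Phi> g \<noteq> (\<lambda>_. 0)}
                   \<and> (\<forall>g. \<Phi> g \<noteq> (\<lambda>_. 0) \<longrightarrow> valid_mon m n g)
                   \<and> (\<forall>g k. d \<le> k \<longrightarrow> \<Phi> g k = 0)}"

definition zpar :: "nat \<Rightarrow> nat \<Rightarrow> nat" where
  "zpar m a = (if a < m then 0 else 1)"

definition lpar :: "nat \<Rightarrow> nat \<Rightarrow> nat" where
  "lpar d0 k = (if k < d0 then 0 else 1)"

text \<open>action of the vector field (x^beta y_nu) partial_i on g (x) v (g a monomial)\<close>
definition actP :: "nat \<Rightarrow> nat \<Rightarrow> nat \<Rightarrow> (nat \<Rightarrow> nat \<Rightarrow> nat \<Rightarrow> nat \<Rightarrow> 'a::field)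
    \<Rightarrow> mon \<Rightarrow> nat \<Rightarrow> mon \<Rightarrow> (nat \<Rightarrow> 'a) \<Rightarrow> mon \<Rightarrow> nat \<Rightarrow> 'a" where
  "actP m n d \<xi> f i g v h k =
      ctens (mulc f (dx i g)) v h k
    + (\<Sum>j<m. ctens (cmulr (dx j f) g) (mv d (\<xi> j i) v) h k)
    + (-1) ^ (mpar f + mpar g + 1) *
        (\<Sum>j<n. ctens (cmulr (dy j f) g) (mv d (\<xi> (m + j) i) v) h k)"

text \<open>action of the vector field (x^beta y_nu) D_i on g (x) v (g a monomial)\<close>
definition actD :: "nat \<Rightarrow> nat \<Rightarrow> nat \<Rightarrow> (nat \<Rightarrow> nat \<Rightarrow> nat \<Rightarrow> nat \<Rightarrow> 'a::field)
    \<Rightarrow> mon \<Rightarrow> nat \<Rightarrow> mon \<Rightarrow> (nat \<Rightarrow> 'a) \<Rightarrow> mon \<Rightarrow> nat \<Rightarrow> 'a" where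
  "actD m n d \<xi> f i g v h k =
      ctens (mulc f (dy i g)) v h k
    + (-1) ^ (mpar g) *
        (\<Sum>j<m. ctens (cmulr (dx j f) g) (mv d (\<xi> j (m + i)) v) h k)
    + (-1) ^ (mpar f + 1) *
        (\<Sum>j<n. ctens (cmulr (dy j f) g) (mv d (\<xi> (m + j) (m + i)) v) h k)"

definition actPV :: "nat \<Rightarrow> nat \<Rightarrow> nat \<Rightarrow> (nat \<Rightarrow> nat \<Rightarrow> nat \<Rightarrow> nat \<Rightarrow> 'a::field)
    \<Rightarrow> mon \<Rightarrow> nat \<Rightarrow> (mon \<Rightarrow> nat \<Rightarrow> 'a) \<Rightarrow> mon \<Rightarrow> nat \<Rightarrow> 'a" where
  "actPV m n d \<xi> f i \<Phi> h k =
     (\<Sum>g\<in>{g. \<Phi> g \<noteq> (\<lambda>_. 0)}. actP m n d \<xi> f i g (\<Phi> g) h k)"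

definition actDV :: "nat \<Rightarrow> nat \<Rightarrow> nat \<Rightarrow> (nat \<Rightarrow> nat \<Rightarrow> nat \<Rightarrow> nat \<Rightarrow> 'a::field)
    \<Rightarrow> mon \<Rightarrow> nat \<Rightarrow> (mon \<Rightarrow> nat \<Rightarrow> 'a) \<Rightarrow> mon \<Rightarrow> nat \<Rightarrow> 'a" where
  "actDV m n d \<xi> f i \<Phi> h k =
     (\<Sum>g\<in>{g. \<Phi> g \<noteq> (\<lambda>_. 0)}. actD m n d \<xi> f i g (\<Phi> g) h k)"

definition is_glmn_rep :: "nat \<Rightarrow> nat \<Rightarrow> nat \<Rightarrow> nat \<Rightarrow> (nat \<Rightarrow> nat \<Rightarrow> nat \<Rightarrow> nat \<Rightarrow> 'a::field) \<Rightarrow> bool" where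
  "is_glmn_rep m n d0 d \<xi> \<longleftrightarrow> d0 \<le> d
    \<and> (\<forall>a b k l. a < m + n \<longrightarrow> b < m + n \<longrightarrow> k < d \<longrightarrow> l < d \<longrightarrow> \<xi> a b k l \<noteq> 0 \<longrightarrow>
          even (zpar m a + zpar m b + lpar d0 k + lpar d0 l))
    \<and> (\<forall>a b c e v. a < m + n \<longrightarrow> b < m + n \<longrightarrow> c < m + n \<longrightarrow> e < m + n \<longrightarrow> v \<in> Lcar d \<longrightarrow>
          (let s = (-1) ^ ((zpar m a + zpar m b) * (zpar m c + zpar m e)) in
           (\<forall>k. mv d (\<xi> a b) (mv d (\<xi> c e) v) k - s * mv d (\<xi> c e) (mv d (\<xi> a b) v) k
              = (if b = c then mv d (\<xi> a e) v k else 0)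
                - s * (if e = a then mv d (\<xi> c b) v k else 0))))"

definition is_irreducible :: "nat \<Rightarrow> nat \<Rightarrow> nat \<Rightarrow> nat \<Rightarrow> (nat \<Rightarrow> nat \<Rightarrow> nat \<Rightarrow> nat \<Rightarrow> 'a::field) \<Rightarrow> bool" where
  "is_irreducible m n d0 d \<xi> \<longleftrightarrow> 0 < d \<and>
    (\<forall>U. U \<subseteq> Lcar d
       \<longrightarrow> (\<lambda>_. 0) \<in> U
       \<longrightarrow> (\<forall>u\<in>U. \<forall>w\<in>U. (\<lambda>k. u k + w k) \<in> U)
       \<longrightarrow> (\<forall>c. \<forall>u\<in>U. (\<lambda>k. c * u k) \<in> U)
       \<longrightarrow> (\<forall>u\<in>U. (\<lambda>k. if k < d0 then u k else 0) \<in> U)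
       \<longrightarrow> (\<forall>a b. \<forall>u\<in>U. a < m + n \<longrightarrow> b < m + n \<longrightarrow> mv d (\<xi> a b) u \<in> U)
       \<longrightarrow> U = {\<lambda>_. 0} \<or> U = Lcar d)"

text \<open>M is a g-submodule (graded subspace stable under all x^beta y_nu partial_i, x^beta y_nu D_i,
  which span W(m,n))\<close>
definition is_Wsubmodule :: "nat \<Rightarrow> nat \<Rightarrow> nat \<Rightarrow> nat \<Rightarrow> (nat \<Rightarrow> nat \<Rightarrow> nat \<Rightarrow> nat \<Rightarrow> 'a::field)
    \<Rightarrow> (mon \<Rightarrow> nat \<Rightarrow> 'a) set \<Rightarrow> bool" where
  "is_Wsubmodule m n d0 d \<xi> M \<longleftrightarrow> M \<subseteq> Vcar m n d
    \<and> (\<lambda>_ _. 0) \<in> M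
    \<and> (\<forall>\<Phi>\<in>M. \<forall>\<Psi>\<in>M. (\<lambda>g k. \<Phi> g k + \<Psi> g k) \<in> M)
    \<and> (\<forall>c. \<forall>\<Phi>\<in>M. (\<lambda>g k. c * \<Phi> g k) \<in> M)
    \<and> (\<forall>\<Phi>\<in>M. (\<lambda>g k. if even (mpar g + lpar d0 k) then \<Phi> g k else 0) \<in> M)
    \<and> (\<forall>f i. \<forall>\<Phi>\<in>M. valid_mon m n f \<longrightarrow> i < m \<longrightarrow> actPV m n d \<xi> f i \<Phi> \<in> M)
    \<and> (\<forall>f i. \<forall>\<Phi>\<in>M. valid_mon m n f \<longrightarrow> i < n \<longrightarrow> actDV m n d \<xi> f i \<Phi> \<in> M)"

definition Mflat :: "nat \<Rightarrow> nat \<Rightarrow> nat \<Rightarrow> (mon \<Rightarrow> nat \<Rightarrow> 'a::field) set \<Rightarrow> (nat \<Rightarrow> 'a) set" where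
  "Mflat m n d M = {v \<in> Lcar d. \<forall>g. valid_mon m n g \<longrightarrow> tens g v \<in> M}"

end

theory Submission
  imports Defs
begin

text \<open>Apply a vector field f \<partial>_i (or f D_i) to g \<otimes> v with v in M-flat. The term
  f \<partial>_i(g) \<otimes> v already lies in M, hence so do the remaining terms
  \<partial>_j(f) g \<otimes> \<xi>(x_j \<partial>_i) v and D_j(f) g \<otimes> \<xi>(y_j \<partial>_i) v; for f = x_j or f = y_j exactly one
  of them survives. So M-flat is stable under \<xi>(gl(m|n)), and it is graded because M is.
  By irreducibility M-flat = L(\<lambda>), so M contains every g \<otimes> v, and these span V(\<lambda>).\<close>

lemma tens_apply: "tens g v h k = (if h = g then v k else 0)"
  by (simp add: tens_def ctens_def)

lemma ctens_eq_smult_tens: "ctens c v h k = fst c * tens (snd c) v h k"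
  by (cases c) (simp add: tens_def ctens_def)

lemma tens_zero [simp]: "tens g (\<lambda>_. 0) = (\<lambda>_ _. 0)"
  by (simp add: tens_apply fun_eq_iff)

lemma ctens_zero [simp]: "ctens c (\<lambda>_. 0) = (\<lambda>_ _. 0)"
  by (simp add: ctens_def fun_eq_iff)

lemma mv_zero [simp]: "mv d A (\<lambda>_. 0) = (\<lambda>_. 0)"
  by (simp add: mv_def fun_eq_iff)

lemma tens_add: "tens g (\<lambda>k. u k + w k) = (\<lambda>h k. tens g u h k + tens g w h k)"
  by (simp add: tens_apply fun_eq_iff)

lemma tens_smult: "tens g (\<lambda>k. c * u k) = (\<lambda>h k. c * tens g u h k)"
  by (simp add: tens_apply fun_eq_iff)

lemma sum_tens_support:
  assumes "finite {g. \<Phi> g \<noteq> (\<lambda>_. 0)}"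
  shows "(\<lambda>h k. \<Sum>g | \<Phi> g \<noteq> (\<lambda>_. 0). tens g (\<Phi> g) h k) = \<Phi>"
proof (intro ext)
  fix h k
  have "(\<Sum>g | \<Phi> g \<noteq> (\<lambda>_. 0). tens g (\<Phi> g) h k) = (if \<Phi> h \<noteq> (\<lambda>_. 0) then \<Phi> h k else 0)"
    using assms by (simp add: tens_apply sum.delta)
  then show "(\<Sum>g | \<Phi> g \<noteq> (\<lambda>_. 0). tens g (\<Phi> g) h k) = \<Phi> h k"
    by auto
qed

lemma actPV_tens: "actPV m n d \<xi> f i (tens g v) = (\<lambda>h k. actP m n d \<xi> f i g v h k)"
proof (cases "v = (\<lambda>_. 0)")
  case True
  show ?thesis unfolding True by (simp add: actPV_def actP_def fun_eq_iff)
next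
  case False
  then have "{g'. tens g v g' \<noteq> (\<lambda>_. 0)} = {g}" by (auto simp: tens_apply fun_eq_iff)
  moreover have "tens g v g = v" by (simp add: tens_apply fun_eq_iff)
  ultimately show ?thesis by (intro ext) (simp only: actPV_def, simp)
qed

lemma actDV_tens: "actDV m n d \<xi> f i (tens g v) = (\<lambda>h k. actD m n d \<xi> f i g v h k)"
proof (cases "v = (\<lambda>_. 0)")
  case True
  show ?thesis unfolding True by (simp add: actDV_def actD_def fun_eq_iff)
next
  case False
  then have "{g'. tens g v g' \<noteq> (\<lambda>_. 0)} = {g}" by (auto simp: tens_apply fun_eq_iff)
  moreover have "tens g v g = v" by (simp add: tens_apply fun_eq_iff)
  ultimately show ?thesis by (intro ext) (simp only: actDV_def, simp)
qed

lemma valid_mon_mmul: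
  "valid_mon m n f \<Longrightarrow> valid_mon m n g \<Longrightarrow> valid_mon m n (snd (mmul f g :: 'a::field \<times> mon))"
  by (auto simp: valid_mon_def mmul_def)

lemma valid_mon_dx: "valid_mon m n g \<Longrightarrow> valid_mon m n (snd (dx i g :: 'a::field \<times> mon))"
  by (auto simp: valid_mon_def dx_def)

lemma valid_mon_dy: "valid_mon m n g \<Longrightarrow> valid_mon m n (snd (dy i g :: 'a::field \<times> mon))"
  by (auto simp: valid_mon_def dy_def)

definition xvar :: "nat \<Rightarrow> mon" where
  "xvar j = ((\<lambda>k. if k = j then 1 else 0), {})"

definition yvar :: "nat \<Rightarrow> mon" where
  "yvar j = ((\<lambda>_. 0), {j})"

lemma valid_mon_xvar: "j < m \<Longrightarrow> valid_mon m n (xvar j)"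
  by (simp add: valid_mon_def xvar_def)

lemma valid_mon_yvar: "j < n \<Longrightarrow> valid_mon m n (yvar j)"
  by (simp add: valid_mon_def yvar_def)

lemma mpar_yvar [simp]: "mpar (yvar j) = 1"
  by (simp add: mpar_def yvar_def)

lemma mmul_one_left [simp]: "(mmul ((\<lambda>_. 0), {}) g :: 'a::field \<times> mon) = (1, g)"
  by (cases g) (simp add: mmul_def)

lemma sum_dx_xvar:
  assumes "j < m"
  shows "(\<Sum>j'<m. ctens (cmulr (dx j' (xvar j)) g) (w j') h k) = (tens g (w j) h k :: 'a::field)"
proof -
  have "(fst (xvar j))(j := fst (xvar j) j - 1) = (\<lambda>_. 0)"
    by (auto simp: xvar_def)
  then have "ctens (cmulr (dx j' (xvar j)) g) (w j') h k = (if j' = j then tens g (w j) h k else 0)"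
    for j'
    by (cases "j' = j") (simp_all add: ctens_eq_smult_tens dx_def cmulr_def xvar_def)
  then show ?thesis using assms by simp
qed

lemma sum_dy_xvar: "(\<Sum>j'<n. ctens (cmulr (dy j' (xvar j)) g) (w j') h k) = (0::'a::field)"
  by (simp add: ctens_eq_smult_tens dy_def cmulr_def xvar_def)

lemma sum_dx_yvar: "(\<Sum>j'<m. ctens (cmulr (dx j' (yvar j)) g) (w j') h k) = (0::'a::field)"
  by (simp add: ctens_eq_smult_tens dx_def cmulr_def yvar_def)

lemma sum_dy_yvar:
  assumes "j < n"
  shows "(\<Sum>j'<n. ctens (cmulr (dy j' (yvar j)) g) (w j') h k) = (tens g (w j) h k :: 'a::field)"
proof -
  have no_smaller: "{s. s = j \<and> s < j} = {}" by auto
  have "ctens (cmulr (dy j' (yvar j)) g) (w j') h k = (if j' = j then tens g (w j) h k else 0)"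
    for j'
    by (cases "j' = j") (simp_all add: ctens_eq_smult_tens dy_def cmulr_def yvar_def no_smaller)
  then show ?thesis using assms by simp
qed

context
  fixes m n d0 d :: nat and \<xi> :: "nat \<Rightarrow> nat \<Rightarrow> nat \<Rightarrow> nat \<Rightarrow> 'a::field"
    and M :: "(mon \<Rightarrow> nat \<Rightarrow> 'a) set"
  assumes W: "is_Wsubmodule m n d0 d \<xi> M"
begin

lemma Wsubmodule_zero: "(\<lambda>_ _. 0) \<in> M"
  using W unfolding is_Wsubmodule_def by blast

lemma Wsubmodule_add: "\<Phi> \<in> M \<Longrightarrow> \<Psi> \<in> M \<Longrightarrow> (\<lambda>g k. \<Phi> g k + \<Psi> g k) \<in> M"
  using W unfolding is_Wsubmodule_def by blast

lemma Wsubmodule_smult: "\<Phi> \<in> M \<Longrightarrow> (\<lambda>g k. c * \<Phi> g k) \<in> M"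
  using W unfolding is_Wsubmodule_def by blast

lemma Wsubmodule_diff: "\<Phi> \<in> M \<Longrightarrow> \<Psi> \<in> M \<Longrightarrow> (\<lambda>g k. \<Phi> g k - \<Psi> g k) \<in> M"
  using Wsubmodule_add[of \<Phi> "\<lambda>g k. (-1) * \<Psi> g k"] Wsubmodule_smult[of \<Psi> "-1"] by simp

lemma Wsubmodule_smultD:
  assumes "(\<lambda>g k. c * \<Phi> g k) \<in> M" and "c \<noteq> 0"
  shows "\<Phi> \<in> M"
proof -
  have "(\<lambda>g k. inverse c * (c * \<Phi> g k)) = \<Phi>"
    using assms(2) by (simp add: fun_eq_iff mult.assoc[symmetric])
  then show ?thesis using Wsubmodule_smult[OF assms(1), of "inverse c"] by simp
qed

lemma Wsubmodule_sum:
  "(\<And>x. x \<in> T \<Longrightarrow> F x \<in> M) \<Longrightarrow> (\<lambda>h k. \<Sum>x\<in>T. F x h k) \<in> M"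
proof (induction T rule: infinite_finite_induct)
  case (insert x T)
  then show ?case using Wsubmodule_add[of "F x"] by simp
qed (simp_all add: Wsubmodule_zero)

lemma Mflat_tens_mem: "v \<in> Mflat m n d M \<Longrightarrow> valid_mon m n g \<Longrightarrow> tens g v \<in> M"
  unfolding Mflat_def by blast

lemma Mflat_ctens_mem:
  "v \<in> Mflat m n d M \<Longrightarrow> valid_mon m n (snd c) \<Longrightarrow> (\<lambda>h k. ctens c v h k) \<in> M"
  unfolding ctens_eq_smult_tens by (rule Wsubmodule_smult) (rule Mflat_tens_mem)

lemma Mflat_actP_gl_part:
  assumes v: "v \<in> Mflat m n d M" and f: "valid_mon m n f" and g: "valid_mon m n g" and "i < m"
  shows "(\<lambda>h k. (\<Sum>j<m. ctens (cmulr (dx j f) g) (mv d (\<xi> j i) v) h k)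
    + (-1) ^ (mpar f + mpar g + 1) *
        (\<Sum>j<n. ctens (cmulr (dy j f) g) (mv d (\<xi> (m + j) i) v) h k)) \<in> M"
proof -
  have "(\<lambda>h k. actP m n d \<xi> f i g v h k) \<in> M"
    using W f \<open>i < m\<close> Mflat_tens_mem[OF v g] unfolding is_Wsubmodule_def actPV_tens[symmetric]
    by blast
  moreover have "(\<lambda>h k. ctens (mulc f (dx i g)) v h k) \<in> M"
    by (rule Mflat_ctens_mem[OF v]) (simp add: mulc_def valid_mon_mmul[OF f valid_mon_dx[OF g]])
  ultimately show ?thesis
    using Wsubmodule_diff by (fastforce simp: actP_def)
qed

lemma Mflat_actD_gl_part:
  assumes v: "v \<in> Mflat m n d M" and f: "valid_mon m n f" and g: "valid_mon m n g" and "i < n"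
  shows "(\<lambda>h k. (-1) ^ (mpar g) *
        (\<Sum>j<m. ctens (cmulr (dx j f) g) (mv d (\<xi> j (m + i)) v) h k)
    + (-1) ^ (mpar f + 1) *
        (\<Sum>j<n. ctens (cmulr (dy j f) g) (mv d (\<xi> (m + j) (m + i)) v) h k)) \<in> M"
proof -
  have "(\<lambda>h k. actD m n d \<xi> f i g v h k) \<in> M"
    using W f \<open>i < n\<close> Mflat_tens_mem[OF v g] unfolding is_Wsubmodule_def actDV_tens[symmetric]
    by blast
  moreover have "(\<lambda>h k. ctens (mulc f (dy i g)) v h k) \<in> M"
    by (rule Mflat_ctens_mem[OF v]) (simp add: mulc_def valid_mon_mmul[OF f valid_mon_dy[OF g]])
  ultimately show ?thesis
    using Wsubmodule_diff by (fastforce simp: actD_def)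
qed

lemma Mflat_mv_tens_mem:
  assumes v: "v \<in> Mflat m n d M" and g: "valid_mon m n g" and "a < m + n" and "b < m + n"
  shows "tens g (mv d (\<xi> a b) v) \<in> M"
proof (cases "a < m")
  case a: True
  show ?thesis
  proof (cases "b < m")
    case True
    with Mflat_actP_gl_part[OF v valid_mon_xvar[OF a] g] show ?thesis
      using a by (simp add: sum_dx_xvar sum_dy_xvar)
  next
    case False
    then obtain i where i: "b = m + i" "i < n"
      using \<open>b < m + n\<close> by (metis add_diff_inverse_nat add_less_cancel_left)
    from Mflat_actD_gl_part[OF v valid_mon_xvar[OF a] g \<open>i < n\<close>]
    have "(\<lambda>h k. (-1) ^ mpar g * tens g (mv d (\<xi> a b) v) h k) \<in> M"
      using a i by (simp add: sum_dx_xvar sum_dy_xvar)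
    then show ?thesis by (rule Wsubmodule_smultD) simp
  qed
next
  case False
  then obtain j where j: "a = m + j" "j < n"
    using \<open>a < m + n\<close> by (metis add_diff_inverse_nat add_less_cancel_left)
  show ?thesis
  proof (cases "b < m")
    case True
    from Mflat_actP_gl_part[OF v valid_mon_yvar[OF \<open>j < n\<close>] g True]
    have "(\<lambda>h k. (-1) ^ (1 + mpar g + 1) * tens g (mv d (\<xi> a b) v) h k) \<in> M"
      using j by (simp add: sum_dx_yvar sum_dy_yvar)
    then show ?thesis by (rule Wsubmodule_smultD) simp
  next
    case False
    then obtain i where i: "b = m + i" "i < n"
      using \<open>b < m + n\<close> by (metis add_diff_inverse_nat add_less_cancel_left)
    from Mflat_actD_gl_part[OF v valid_mon_yvar[OF \<open>j < n\<close>] g \<open>i < n\<close>] show ?thesis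
      using i j by (simp add: sum_dx_yvar sum_dy_yvar)
  qed
qed

lemma tens_even_part_mem:
  assumes "tens g u \<in> M"
  shows "tens g (\<lambda>k. if k < d0 then u k else 0) \<in> M"
proof -
  let ?proj = "\<lambda>h k. if even (mpar h + lpar d0 k) then tens g u h k else 0"
  have proj: "?proj \<in> M"
    using W assms unfolding is_Wsubmodule_def by blast
  show ?thesis
  proof (cases "even (mpar g)")
    case True
    then have "?proj = tens g (\<lambda>k. if k < d0 then u k else 0)"
      by (auto simp: fun_eq_iff tens_apply lpar_def)
    with proj show ?thesis by simp
  next
    case False
    then have "tens g (\<lambda>k. if k < d0 then u k else 0) = (\<lambda>h k. tens g u h k - ?proj h k)"
      by (auto simp: fun_eq_iff tens_apply lpar_def)
    with Wsubmodule_diff[OF assms proj] show ?thesis by simp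
  qed
qed

lemma Mflat_eq_Lcar:
  assumes "is_irreducible m n d0 d \<xi>" and "Mflat m n d M \<noteq> {\<lambda>_. 0}"
  shows "Mflat m n d M = Lcar d"
proof -
  let ?U = "Mflat m n d M"
  have "?U = {\<lambda>_. 0} \<or> ?U = Lcar d"
  proof (rule assms(1)[unfolded is_irreducible_def, THEN conjunct2, rule_format])
    show "?U \<subseteq> Lcar d"
      by (auto simp: Mflat_def)
    show "(\<lambda>_. 0) \<in> ?U"
      by (simp add: Mflat_def Lcar_def Wsubmodule_zero)
    show "(\<lambda>k. u k + w k) \<in> ?U" if "u \<in> ?U" "w \<in> ?U" for u w
      using that Wsubmodule_add by (auto simp: Mflat_def Lcar_def tens_add)
    show "(\<lambda>k. c * u k) \<in> ?U" if "u \<in> ?U" for c u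
      using that Wsubmodule_smult by (auto simp: Mflat_def Lcar_def tens_smult)
    show "(\<lambda>k. if k < d0 then u k else 0) \<in> ?U" if "u \<in> ?U" for u
      using that tens_even_part_mem by (auto simp: Mflat_def Lcar_def)
    show "mv d (\<xi> a b) u \<in> ?U" if "u \<in> ?U" "a < m + n" "b < m + n" for a b u
      using that Mflat_mv_tens_mem by (auto simp: Mflat_def Lcar_def mv_def)
  qed
  with assms(2) show ?thesis by blast
qed

lemma Wsubmodule_eq_Vcar_if_Mflat_eq_Lcar:
  assumes "Mflat m n d M = Lcar d"
  shows "M = Vcar m n d"
proof
  show "M \<subseteq> Vcar m n d"
    using W by (simp add: is_Wsubmodule_def)
  show "Vcar m n d \<subseteq> M"
  proof
    fix \<Phi> :: "mon \<Rightarrow> nat \<Rightarrow> 'a"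
    assume \<Phi>: "\<Phi> \<in> Vcar m n d"
    have "tens g (\<Phi> g) \<in> M" if "\<Phi> g \<noteq> (\<lambda>_. 0)" for g
      using \<Phi> that assms Mflat_tens_mem unfolding Vcar_def Lcar_def by blast
    then have "(\<lambda>h k. \<Sum>g | \<Phi> g \<noteq> (\<lambda>_. 0). tens g (\<Phi> g) h k) \<in> M"
      by (intro Wsubmodule_sum) simp
    with \<Phi> show "\<Phi> \<in> M"
      by (simp add: Vcar_def sum_tens_support)
  qed
qed

end

theorem mainTheorem3:
  fixes m n d0 d :: nat
    and \<xi> :: "nat \<Rightarrow> nat \<Rightarrow> nat \<Rightarrow> nat \<Rightarrow> 'a::field_char_0"
    and M :: "(mon \<Rightarrow> nat \<Rightarrow> 'a) set"
  assumes "alg_closed_field TYPE('a)"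
    and "1 \<le> m" and "1 \<le> n"
    and "is_glmn_rep m n d0 d \<xi>"
    and "is_irreducible m n d0 d \<xi>"
    and "is_Wsubmodule m n d0 d \<xi> M"
    and "Mflat m n d M \<noteq> {\<lambda>_. 0}"
  shows "M = Vcar m n d"
  using Wsubmodule_eq_Vcar_if_Mflat_eq_Lcar[OF assms(6) Mflat_eq_Lcar[OF assms(6,5,7)]] .

end
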